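(* For any $n\in\mathbb{R}^+$, $f\in D_{HK}$, $\phi\in\mathcal{D}(a,b)$ and any nonnegative integer $j$, $$\langle D^{j}(\mathcal{J}_a^{n}f),\phi\rangle=\langle D^{j}f,\mathcal{J}_{b_-}^n\phi\rangle.$$
   Context: Fix real numbers $a<b$. $\mathcal{D}(a,b)$ is the space of real $C^\infty$ functions with compact support in $(a,b)$, $\mathcal{D}'(a,b)$ the distributions on $(a,b)$, $\langle T,\psi\rangle$ the pairing (for $T\in D_{HK}$ and $\psi$ of bounded variation, $\langle T,\psi\rangle=\int_a^b T\psi$), $D$ the distributional derivative, $D^j$ its $j$-fold iterate, $D^0=I$. Let $C_0=\{F\in C[a,b]:F(a)=0\}$. A distribution $f$ is Henstock–Kurzweil integrable if $f=DF$ for some (unique) $F\in C_0$; $\int_c^d f=F(d)-F(c)$. $D_{HK}$ is the space of these with the Alexiewicz norm $\|f\|_A=\sup_{[a,b]}|F|$; $L^1[a,b]$ is dense in it. Left Riemann–Liouville integral: for $n\ge1$, $\mathcal{J}_a^nf(x)=\frac{1}{\Gamma(n)}\int_a^x(x-t)^{n-1}f(t)\,dt$; for $0<n<1$, $\mathcal{J}_a^nf(x)=\frac{1}{\Gamma(n)}\lim_{k}\int_a^x(x-t)^{n-1}f_k(t)\,dt$ with $(f_k)\subset L^1[a,b]$, $\|f_k-f\|_A\to0$. Right-sided Riemann–Liouville integral: for $n\ge1$, $\mathcal{J}_{b_-}^nf(x)=\frac{1}{\Gamma(n)}\int_x^b(t-x)^{n-1}f(t)\,dt$; for $0<n<1$,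 $\mathcal{J}_{b_-}^nf(x)=\frac{1}{\Gamma(n)}\lim_{k}\int_x^b(t-x)^{n-1}f_k(t)\,dt$ with $(f_k)$ as before; $\mathcal{J}_{b_-}^0=I$. *)

theory Defs
  imports "HOL-Analysis.Analysis"
begin

definition test_fun :: "real \<Rightarrow> real \<Rightarrow> (real \<Rightarrow> real) \<Rightarrow> bool" where
  "test_fun a b \<phi> \<longleftrightarrow>
     (\<forall>k x. (deriv ^^ k) \<phi> differentiable (at x)) \<and>
     (\<exists>c d. a < c \<and> d < b \<and> (\<forall>x. x \<notin> {c..d} \<longrightarrow> \<phi> x = 0))"

type_synonym distr = "(real \<Rightarrow> real) \<Rightarrow> real"

definition dist_deriv :: "nat \<Rightarrow> distr \<Rightarrow> distr" where
  "dist_deriv j T = (\<lambda>\<phi>. (-1) ^ j * T ((deriv ^^ j) \<phi>))"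

definition regular_dist :: "real \<Rightarrow> real \<Rightarrow> (real \<Rightarrow> real) \<Rightarrow> distr" where
  "regular_dist a b g = (\<lambda>\<phi>. integral {a..b} (\<lambda>x. g x * \<phi> x))"

text \<open>The HK integrable distribution f = DF given by its primitive F in C_0:
  pairing with phi is -integral of F times phi'.\<close>
definition hk_dist :: "real \<Rightarrow> real \<Rightarrow> (real \<Rightarrow> real) \<Rightarrow> distr" where
  "hk_dist a b F = (\<lambda>\<phi>. - integral {a..b} (\<lambda>x. F x * deriv \<phi> x))"

definition rs_has_integral :: "(real \<Rightarrow> real) \<Rightarrow> (real \<Rightarrow> real) \<Rightarrow> real \<Rightarrow> real \<Rightarrow> real \<Rightarrow> bool" where
  "rs_has_integral F g c d I \<longleftrightarrow>
     (\<forall>e>0. \<exists>\<delta>>0. \<forall>p. p tagged_division_of {c..d} \<and> (\<lambda>x. ball x \<delta>) fine p \<longrightarrow>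
        \<bar>(\<Sum>(x,K)\<in>p. F x * (g (Sup K) - g (Inf K))) - I\<bar> < e)"

definition rs_integral :: "(real \<Rightarrow> real) \<Rightarrow> (real \<Rightarrow> real) \<Rightarrow> real \<Rightarrow> real \<Rightarrow> real" where
  "rs_integral F g c d = (THE I. rs_has_integral F g c d I)"

text \<open>HK integral over [c,d] of f = DF times a function g of bounded variation,
  defined by integration by parts: F(d)g(d) - F(c)g(c) - (RS) integral of F dg.\<close>
definition hk_int :: "real \<Rightarrow> real \<Rightarrow> (real \<Rightarrow> real) \<Rightarrow> (real \<Rightarrow> real) \<Rightarrow> real" where
  "hk_int c d F g = F d * g d - F c * g c - rs_integral F g c d"

definition rl_kernel :: "real \<Rightarrow> real \<Rightarrow> real" where
  "rl_kernel n s = (if n = 1 then 1 else s powr (n - 1))"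

definition RL_left_pt :: "real \<Rightarrow> real \<Rightarrow> (real \<Rightarrow> real) \<Rightarrow> real \<Rightarrow> real" where
  "RL_left_pt a n F x = (1 / Gamma n) * hk_int a x F (\<lambda>t. rl_kernel n (x - t))"

definition RL_left_L1 :: "real \<Rightarrow> real \<Rightarrow> (real \<Rightarrow> real) \<Rightarrow> real \<Rightarrow> real" where
  "RL_left_L1 a n h x = (1 / Gamma n) * integral {a..x} (\<lambda>t. rl_kernel n (x - t) * h t)"

definition A_dist :: "real \<Rightarrow> real \<Rightarrow> (real \<Rightarrow> real) \<Rightarrow> (real \<Rightarrow> real) \<Rightarrow> real" where
  "A_dist a b h F = (SUP x\<in>{a..b}. \<bar>integral {a..x} h - F x\<bar>)"

text \<open>Left RL integral, 0 < n < 1, of f = DF: the element of D_HK (given by its primitive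
  G in C_0, extended by 0 outside [a,b]) that is the Alexiewicz limit of the RL integrals
  of any L^1 sequence converging to f in the Alexiewicz norm.\<close>
definition RL_left_frac_prim :: "real \<Rightarrow> real \<Rightarrow> real \<Rightarrow> (real \<Rightarrow> real) \<Rightarrow> (real \<Rightarrow> real)" where
  "RL_left_frac_prim a b n F = (THE G. continuous_on {a..b} G \<and> G a = 0 \<and>
      (\<forall>x. x \<notin> {a..b} \<longrightarrow> G x = 0) \<and>
      (\<forall>fs :: nat \<Rightarrow> real \<Rightarrow> real.
         (\<forall>k. fs k absolutely_integrable_on {a..b}) \<and> (\<lambda>k. A_dist a b (fs k) F) \<longlonglongrightarrow> 0
         \<longrightarrow> (\<lambda>k. A_dist a b (RL_left_L1 a n (fs k)) G) \<longlonglongrightarrow> 0))"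

definition RL_left :: "real \<Rightarrow> real \<Rightarrow> real \<Rightarrow> (real \<Rightarrow> real) \<Rightarrow> distr" where
  "RL_left a b n F = (if 1 \<le> n then regular_dist a b (RL_left_pt a n F)
                      else hk_dist a b (RL_left_frac_prim a b n F))"

definition RL_right :: "real \<Rightarrow> real \<Rightarrow> (real \<Rightarrow> real) \<Rightarrow> real \<Rightarrow> real" where
  "RL_right b n \<phi> x = (1 / Gamma n) * integral {x..b} (\<lambda>t. rl_kernel n (t - x) * \<phi> t)"

end

theory Submission
  imports Defs
begin

text \<open>On test functions D^j acts as (-1)^j times the pairing with the j-th derivative, and
  since \<phi> has compact support in (a,b), the j-th derivative of J_{b-}^n \<phi> is J_{b-}^n \<phi>^(j).
  With \<psi> = \<phi>^(j) both sides therefore reduce to -\<integral>_a^b F (J_{b-}^n \<psi>'): on the right by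
  integrating the HK integral of f = DF against the smooth function J_{b-}^n \<psi> by parts.
  On the left, J_a^n f is the function J_a^(n-1) F for n > 1 (integration by parts in its
  defining HK integral), F itself for n = 1, and for n < 1 the derivative of J_a^n F, since
  J_a^n F is the uniform limit of the primitives of J_a^n f_k whenever f_k \<rightarrow> f in the
  Alexiewicz norm. In each case Fubini's theorem on the triangle a \<le> t \<le> x \<le> b moves the
  kernel from F onto \<psi>, and J_{b-}^m \<psi> = -J_{b-}^(m+1) \<psi>' closes the gap.\<close>

section \<open>Riemann--Stieltjes integrals against absolutely continuous integrators\<close>

lemma rs_has_integral_unique:
  assumes I: "rs_has_integral F g c d I" and J: "rs_has_integral F g c d J"
  shows "I = J"
proof (rule ccontr)
  assume "I \<noteq> J"
  define e where "e = \<bar>I - J\<bar> / 2"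
  have "e > 0" using \<open>I \<noteq> J\<close> by (simp add: e_def)
  obtain d1 where "d1 > 0" and d1: "\<And>p. p tagged_division_of {c..d} \<and> (\<lambda>x. ball x d1) fine p \<Longrightarrow>
        \<bar>(\<Sum>(x,K)\<in>p. F x * (g (Sup K) - g (Inf K))) - I\<bar> < e"
    using I \<open>e > 0\<close> unfolding rs_has_integral_def by meson
  obtain d2 where "d2 > 0" and d2: "\<And>p. p tagged_division_of {c..d} \<and> (\<lambda>x. ball x d2) fine p \<Longrightarrow>
        \<bar>(\<Sum>(x,K)\<in>p. F x * (g (Sup K) - g (Inf K))) - J\<bar> < e"
    using J \<open>e > 0\<close> unfolding rs_has_integral_def by meson
  have "gauge (\<lambda>x. ball x (min d1 d2))" using \<open>d1 > 0\<close> \<open>d2 > 0\<close> by (simp add: gauge_ball)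
  then obtain p where p: "p tagged_division_of {c..d}" and fine: "(\<lambda>x. ball x (min d1 d2)) fine p"
    using fine_division_exists[of _ c d] by auto
  have "(\<lambda>x. ball x d1) fine p" "(\<lambda>x. ball x d2) fine p"
    using fine by (simp_all add: ball_min_Int fine_Int)
  then have "\<bar>(\<Sum>(x,K)\<in>p. F x * (g (Sup K) - g (Inf K))) - I\<bar> < e"
    and "\<bar>(\<Sum>(x,K)\<in>p. F x * (g (Sup K) - g (Inf K))) - J\<bar> < e"
    using d1 d2 p by auto
  then have "\<bar>I - J\<bar> < 2 * e" by linarith
  then show False by (simp add: e_def)
qed

lemma rs_integral_eqI: "rs_has_integral F g c d I \<Longrightarrow> rs_integral F g c d = I"
  unfolding rs_integral_def using rs_has_integral_unique by blast

lemma absolutely_integrable_continuous_mult: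
  fixes f g :: "real \<Rightarrow> real"
  assumes "continuous_on {p..q} f" "g absolutely_integrable_on {p..q}"
  shows "(\<lambda>x. f x * g x) absolutely_integrable_on {p..q}"
proof (rule absolutely_integrable_bounded_measurable_product_real)
  show "f \<in> borel_measurable (lebesgue_on {p..q})"
    using assms(1) by (simp add: continuous_imp_measurable_on_sets_lebesgue)
  show "bounded (f ` {p..q})"
    using assms(1) compact_Icc compact_continuous_image compact_imp_bounded by blast
qed (use assms in auto)

lemma abs_integral_const_mult_diff_le:
  fixes F g :: "real \<Rightarrow> real"
  assumes Fg: "(\<lambda>t. F t * g t) integrable_on K" and g: "g absolutely_integrable_on K"
    and close: "\<And>t. t \<in> K \<Longrightarrow> \<bar>c - F t\<bar> \<le> \<eta>"
  shows "\<bar>c * integral K g - integral K (\<lambda>t. F t * g t)\<bar> \<le> \<eta> * integral K (\<lambda>t. \<bar>g t\<bar>)"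
proof -
  have cg: "(\<lambda>t. c * g t) integrable_on K"
    using g set_lebesgue_integral_eq_integral(1) integrable_on_mult_right by blast
  have ag: "(\<lambda>t. \<bar>g t\<bar>) integrable_on K"
    using g by (simp add: absolutely_integrable_on_def)
  have "c * integral K g - integral K (\<lambda>t. F t * g t) = integral K (\<lambda>t. (c - F t) * g t)"
    using integral_diff[OF cg Fg] by (simp add: left_diff_distrib)
  also have "norm \<dots> \<le> integral K (\<lambda>t. \<eta> * \<bar>g t\<bar>)"
  proof (rule integral_norm_bound_integral)
    show "(\<lambda>t. (c - F t) * g t) integrable_on K"
      using integrable_diff[OF cg Fg] by (simp add: left_diff_distrib)
    show "(\<lambda>t. \<eta> * \<bar>g t\<bar>) integrable_on K"
      using ag by (rule integrable_on_mult_right)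
  qed (simp add: abs_mult close mult_right_mono)
  finally show ?thesis by simp
qed

lemma rs_sum_integral_diff_le:
  fixes F g g' :: "real \<Rightarrow> real"
  assumes p: "p tagged_division_of {u..v}"
    and Fg': "(\<lambda>t. F t * g' t) integrable_on {u..v}" and g': "g' absolutely_integrable_on {u..v}"
    and FTC: "\<And>l r. u \<le> l \<Longrightarrow> l \<le> r \<Longrightarrow> r \<le> v \<Longrightarrow> (g' has_integral (g r - g l)) {l..r}"
    and close: "\<And>x K t. (x, K) \<in> p \<Longrightarrow> t \<in> K \<Longrightarrow> \<bar>F x - F t\<bar> \<le> \<eta>"
  shows "\<bar>(\<Sum>(x,K)\<in>p. F x * (g (Sup K) - g (Inf K))) - integral {u..v} (\<lambda>t. F t * g' t)\<bar>
       \<le> \<eta> * integral {u..v} (\<lambda>t. \<bar>g' t\<bar>)"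
proof -
  have p': "p tagged_division_of cbox u v" using p by simp
  have cell: "\<bar>F x * (g (Sup K) - g (Inf K)) - integral K (\<lambda>t. F t * g' t)\<bar>
      \<le> \<eta> * integral K (\<lambda>t. \<bar>g' t\<bar>)" if xK: "(x, K) \<in> p" for x K
  proof -
    obtain l r where K: "K = {l..r}" "x \<in> K" "K \<subseteq> {u..v}"
      using tagged_division_ofD(2-4)[OF p' xK] by (metis box_real(2))
    then have "l \<le> r" "u \<le> l" "r \<le> v" by auto
    then have "g (Sup K) - g (Inf K) = integral K g'"
      using FTC[OF \<open>u \<le> l\<close> \<open>l \<le> r\<close> \<open>r \<le> v\<close>] K by (simp add: integral_unique)
    moreover have "(\<lambda>t. F t * g' t) integrable_on K" "g' absolutely_integrable_on K"
      using integrable_on_subinterval[OF Fg'] set_integrable_subset[OF g'] K by auto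
    ultimately show ?thesis
      using abs_integral_const_mult_diff_le close[OF xK] by metis
  qed
  have "integral {u..v} (\<lambda>t. F t * g' t) = (\<Sum>(x,K)\<in>p. integral K (\<lambda>t. F t * g' t))"
    using integral_combine_tagged_division_topdown[OF _ p'] Fg' by simp
  then have "\<bar>(\<Sum>(x,K)\<in>p. F x * (g (Sup K) - g (Inf K))) - integral {u..v} (\<lambda>t. F t * g' t)\<bar>
      = \<bar>\<Sum>(x,K)\<in>p. F x * (g (Sup K) - g (Inf K)) - integral K (\<lambda>t. F t * g' t)\<bar>"
    by (simp add: sum_subtractf case_prod_unfold)
  also have "\<dots> \<le> (\<Sum>(x,K)\<in>p. \<eta> * integral K (\<lambda>t. \<bar>g' t\<bar>))"
    by (rule order_trans[OF sum_abs], rule sum_mono) (use cell in \<open>auto simp: case_prod_unfold\<close>)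
  also have "\<dots> = \<eta> * integral {u..v} (\<lambda>t. \<bar>g' t\<bar>)"
    using integral_combine_tagged_division_topdown[OF _ p', of "\<lambda>t. \<bar>g' t\<bar>"] g'
    by (simp add: absolutely_integrable_on_def sum_distrib_left case_prod_unfold)
  finally show ?thesis .
qed

lemma rs_has_integral_derivative:
  fixes F g g' :: "real \<Rightarrow> real"
  assumes F: "continuous_on {u..v} F" and g': "g' absolutely_integrable_on {u..v}"
    and FTC: "\<And>l r. u \<le> l \<Longrightarrow> l \<le> r \<Longrightarrow> r \<le> v \<Longrightarrow> (g' has_integral (g r - g l)) {l..r}"
  shows "rs_has_integral F g u v (integral {u..v} (\<lambda>t. F t * g' t))"
  unfolding rs_has_integral_def
proof (intro allI impI)
  fix e :: real assume "e > 0"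
  define V where "V = integral {u..v} (\<lambda>t. \<bar>g' t\<bar>)"
  have "V \<ge> 0"
    using g' unfolding V_def absolutely_integrable_on_def by (intro integral_nonneg) auto
  define \<eta> where "\<eta> = e / (V + 1)"
  have "\<eta> > 0" and "\<eta> * V < e"
    using \<open>e > 0\<close> \<open>V \<ge> 0\<close> by (simp_all add: \<eta>_def field_simps)
  obtain \<delta> where "\<delta> > 0" and \<delta>: "\<And>x x'. x \<in> {u..v} \<Longrightarrow> x' \<in> {u..v} \<Longrightarrow> dist x' x < \<delta> \<Longrightarrow>
      dist (F x') (F x) < \<eta>"
    using compact_uniformly_continuous[OF F compact_Icc] \<open>\<eta> > 0\<close>
    unfolding uniformly_continuous_on_def by metis
  have Fg': "(\<lambda>t. F t * g' t) integrable_on {u..v}"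
    using absolutely_integrable_continuous_mult[OF F g'] set_lebesgue_integral_eq_integral(1)
    by blast
  show "\<exists>\<delta>>0. \<forall>p. p tagged_division_of {u..v} \<and> (\<lambda>x. ball x \<delta>) fine p \<longrightarrow>
        \<bar>(\<Sum>(x,K)\<in>p. F x * (g (Sup K) - g (Inf K))) - integral {u..v} (\<lambda>t. F t * g' t)\<bar> < e"
  proof (intro exI[of _ \<delta>] conjI allI impI)
    fix p assume p: "p tagged_division_of {u..v} \<and> (\<lambda>x. ball x \<delta>) fine p"
    have "\<bar>F x - F t\<bar> \<le> \<eta>" if "(x, K) \<in> p" "t \<in> K" for x K t
    proof -
      have "x \<in> K" "K \<subseteq> {u..v}" "K \<subseteq> ball x \<delta>"
        using p that by (auto simp: fine_def)
      then show ?thesis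
        using \<delta>[of x t] that by (force simp: dist_real_def abs_minus_commute)
    qed
    then have "\<bar>(\<Sum>(x,K)\<in>p. F x * (g (Sup K) - g (Inf K))) - integral {u..v} (\<lambda>t. F t * g' t)\<bar> \<le> \<eta> * V"
      unfolding V_def using p Fg' g' FTC by (intro rs_sum_integral_diff_le) auto
    then show "\<bar>(\<Sum>(x,K)\<in>p. F x * (g (Sup K) - g (Inf K))) - integral {u..v} (\<lambda>t. F t * g' t)\<bar> < e"
      using \<open>\<eta> * V < e\<close> by linarith
  qed (fact \<open>\<delta> > 0\<close>)
qed

lemma hk_int_eq_integral:
  fixes F g g' :: "real \<Rightarrow> real"
  assumes "continuous_on {c..d} F" and "g' absolutely_integrable_on {c..d}"
    and "\<And>l r. c \<le> l \<Longrightarrow> l \<le> r \<Longrightarrow> r \<le> d \<Longrightarrow> (g' has_integral (g r - g l)) {l..r}"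
  shows "hk_int c d F g = F d * g d - F c * g c - integral {c..d} (\<lambda>t. F t * g' t)"
  unfolding hk_int_def by (simp add: rs_integral_eqI[OF rs_has_integral_derivative[OF assms]])

lemma hk_int_eq_integral_deriv:
  fixes F g g' :: "real \<Rightarrow> real"
  assumes F: "continuous_on {c..d} F" and g': "continuous_on {c..d} g'"
    and g: "\<And>x. (g has_real_derivative g' x) (at x)"
  shows "hk_int c d F g = F d * g d - F c * g c - integral {c..d} (\<lambda>t. F t * g' t)"
proof (rule hk_int_eq_integral[OF F])
  show "g' absolutely_integrable_on {c..d}"
    using g' by (rule absolutely_integrable_continuous_real)
  show "(g' has_integral g r - g l) {l..r}" if "l \<le> r" for l r
    using that g by (intro fundamental_theorem_of_calculus)
      (auto simp: has_real_derivative_iff_has_vector_derivative has_vector_derivative_at_within)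
qed

section \<open>Power kernels\<close>

lemma Gamma_real_plus1: "x > 0 \<Longrightarrow> Gamma (x + 1) = x * Gamma (x::real)"
  by (rule Gamma_plus1) (auto dest: nonpos_Ints_nonpos)

lemma has_integral_right_kernel:
  fixes m y q :: real
  assumes "m > 0" and "y \<le> q"
  shows "((\<lambda>t. (t - y) powr (m - 1)) has_integral (q - y) powr m / m) {y..q}"
proof -
  have "((\<lambda>s. s powr (m - 1)) has_integral (q - y) powr m / m) {0..q - y}"
    using has_integral_powr_from_0[of "m - 1" "q - y"] assms by simp
  from has_integral_shift_real_ivl[OF this, of "-y"] show ?thesis by simp
qed

lemma has_integral_left_kernel:
  fixes m p x :: real
  assumes "m > 0" and "p \<le> x"
  shows "((\<lambda>t. (x - t) powr (m - 1)) has_integral (x - p) powr m / m) {p..x}"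
proof -
  have "((\<lambda>s. s powr (m - 1)) has_integral (x - p) powr m / m) {0..x - p}"
    using has_integral_powr_from_0[of "m - 1" "x - p"] assms by simp
  then have "((\<lambda>s. (- s) powr (m - 1)) has_integral (x - p) powr m / m) {- (x - p)..- 0}"
    by (subst has_integral_reflect_real) simp
  from has_integral_shift_real_ivl[OF this, of "-x"] show ?thesis by simp
qed

lemma has_integral_left_kernel_deriv:
  fixes m p q x :: real
  assumes m: "m > 0" and "p \<le> q" and "q \<le> x"
  shows "((\<lambda>t. - (m * (x - t) powr (m - 1))) has_integral (x - q) powr m - (x - p) powr m) {p..q}"
proof (rule fundamental_theorem_of_calculus_interior[OF \<open>p \<le> q\<close>])
  show "continuous_on {p..q} (\<lambda>t. (x - t) powr m)"
    using assms by (intro continuous_on_powr' continuous_intros) auto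
  show "((\<lambda>t. (x - t) powr m) has_vector_derivative - (m * (x - t) powr (m - 1))) (at t)"
    if "t \<in> {p<..<q}" for t
  proof -
    have "x - t > 0" using that \<open>q \<le> x\<close> by auto
    then have "((\<lambda>t. (x - t) powr m) has_real_derivative m * (x - t) powr (m - 1) * -1) (at t)"
      using DERIV_fun_powr[of "\<lambda>t. x - t" "-1" t m] by (auto intro!: derivative_eq_intros)
    then show ?thesis
      by (simp add: has_real_derivative_iff_has_vector_derivative)
  qed
qed

lemma absolutely_integrable_right_kernel:
  fixes m y q :: real
  assumes "m > 0"
  shows "(\<lambda>t. (t - y) powr (m - 1)) absolutely_integrable_on {y..q}"
proof (cases "y \<le> q")
  case True
  then show ?thesis
    using has_integral_right_kernel[OF assms True]
    by (intro nonnegative_absolutely_integrable_1) (auto simp: integrable_on_def)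
qed simp

lemma absolutely_integrable_left_kernel:
  fixes m p x :: real
  assumes "m > 0"
  shows "(\<lambda>t. (x - t) powr (m - 1)) absolutely_integrable_on {p..x}"
proof (cases "p \<le> x")
  case True
  then show ?thesis
    using has_integral_left_kernel[OF assms True]
    by (intro nonnegative_absolutely_integrable_1) (auto simp: integrable_on_def)
qed simp

lemma continuous_on_Icc_abs_bound:
  fixes f :: "real \<Rightarrow> real"
  assumes "continuous_on {p..q} f"
  obtains B where "B > 0" "\<And>x. x \<in> {p..q} \<Longrightarrow> \<bar>f x\<bar> \<le> B"
proof -
  have "bounded (f ` {p..q})"
    using assms compact_Icc compact_continuous_image compact_imp_bounded by blast
  then show ?thesis
    using that by (auto simp: bounded_pos)
qed

lemma integral_abs_right_kernel_mult_le:
  fixes X :: "real \<Rightarrow> real"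
  assumes m: "m > 0" and "t \<le> b" and X: "continuous_on {t..b} X"
    and B: "\<And>s. s \<in> {t..b} \<Longrightarrow> \<bar>X s\<bar> \<le> B"
  shows "integral {t..b} (\<lambda>s. \<bar>(s - t) powr (m - 1) * X s\<bar>) \<le> B * (b - t) powr m / m"
proof -
  have kernel: "((\<lambda>s. (s - t) powr (m - 1)) has_integral (b - t) powr m / m) {t..b}"
    using has_integral_right_kernel[OF m \<open>t \<le> b\<close>] .
  have "integral {t..b} (\<lambda>s. \<bar>(s - t) powr (m - 1) * X s\<bar>) \<le> integral {t..b} (\<lambda>s. B * (s - t) powr (m - 1))"
  proof (rule integral_le)
    show "(\<lambda>s. \<bar>(s - t) powr (m - 1) * X s\<bar>) integrable_on {t..b}"
      using absolutely_integrable_continuous_mult[OF X absolutely_integrable_right_kernel[OF m]]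
      by (simp add: absolutely_integrable_on_def mult.commute)
    show "(\<lambda>s. B * (s - t) powr (m - 1)) integrable_on {t..b}"
      using kernel by (intro integrable_on_mult_right) (auto simp: integrable_on_def)
    show "\<bar>(s - t) powr (m - 1) * X s\<bar> \<le> B * (s - t) powr (m - 1)" if "s \<in> {t..b}" for s
      using B[OF that] that by (auto simp: abs_mult mult.commute mult_right_mono)
  qed
  also have "\<dots> = B * (b - t) powr m / m"
    using integral_unique[OF kernel] by simp
  finally show ?thesis .
qed

section \<open>The right Riemann--Liouville integral\<close>

text \<open>Unlike \<^const>\<open>rl_kernel\<close>, the kernel here is \<open>s powr (m - 1)\<close> for every m;
  for m = 1 it differs from 1 only at s = 0, since 0 powr 0 = 0 in Isabelle.\<close>
definition RL_right_powr :: "real \<Rightarrow> real \<Rightarrow> (real \<Rightarrow> real) \<Rightarrow> real \<Rightarrow> real" where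
  "RL_right_powr b m \<psi> y = (1 / Gamma m) * integral {y..b} (\<lambda>t. (t - y) powr (m - 1) * \<psi> t)"

lemma RL_right_eq_RL_right_powr: "RL_right b n \<psi> = RL_right_powr b n \<psi>"
proof
  fix y
  have "integral {y..b} (\<lambda>t. rl_kernel n (t - y) * \<psi> t)
      = integral {y..b} (\<lambda>t. (t - y) powr (n - 1) * \<psi> t)"
    by (rule integral_spike[of "{y}"]) (auto simp: rl_kernel_def)
  then show "RL_right b n \<psi> y = RL_right_powr b n \<psi> y"
    by (simp add: RL_right_def RL_right_powr_def)
qed

lemma integral_right_kernel_by_parts:
  fixes \<psi> \<psi>' :: "real \<Rightarrow> real"
  assumes m: "m > 0" and "y \<le> b"
    and \<psi>: "\<And>t. (\<psi> has_real_derivative \<psi>' t) (at t)"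
    and \<psi>': "continuous_on UNIV \<psi>'" and "\<psi> b = 0"
  shows "integral {y..b} (\<lambda>t. (t - y) powr (m - 1) * \<psi> t)
       = - (1 / m) * integral {y..b} (\<lambda>t. (t - y) powr m * \<psi>' t)"
proof -
  define f where "f t = (t - y) powr m / m" for t
  define I where "I = integral {y..b} (\<lambda>t. (t - y) powr m * \<psi>' t)"
  have cf: "continuous_on {y..b} f"
    unfolding f_def using m by (intro continuous_intros continuous_on_powr') auto
  have c\<psi>: "continuous_on {y..b} \<psi>"
    using \<psi> by (meson DERIV_continuous continuous_at_imp_continuous_on)
  have df: "(f has_vector_derivative (t - y) powr (m - 1)) (at t)" if "t \<in> {y<..<b}" for t
  proof -
    have "((\<lambda>t. (t - y) powr m) has_real_derivative m * (t - y) powr (m - 1)) (at t)"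
      using that DERIV_fun_powr[of "\<lambda>t. t - y" 1 t m] by (auto intro!: derivative_eq_intros)
    from DERIV_cdivide[OF this, of m] show ?thesis
      using m by (simp add: f_def[abs_def] has_real_derivative_iff_has_vector_derivative)
  qed
  have d\<psi>: "(\<psi> has_vector_derivative \<psi>' t) (at t)" if "t \<in> {y<..<b}" for t
    using \<psi> by (simp add: has_real_derivative_iff_has_vector_derivative)
  have "((\<lambda>t. f t * \<psi>' t) has_integral (f b * \<psi> b - f y * \<psi> y - (- I / m))) {y..b}"
  proof -
    have "(\<lambda>t. (t - y) powr m * \<psi>' t) integrable_on {y..b}"
      using m by (intro integrable_continuous_interval continuous_intros continuous_on_powr'
          continuous_on_subset[OF \<psi>']) auto
    from has_integral_mult_right[OF integrable_integral[OF this], of "1 / m"]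
    show ?thesis using \<open>\<psi> b = 0\<close> by (simp add: f_def I_def)
  qed
  from integration_by_parts_interior[OF bounded_bilinear_mult \<open>y \<le> b\<close> cf c\<psi> df d\<psi> this]
  have "((\<lambda>t. (t - y) powr (m - 1) * \<psi> t) has_integral - I / m) {y..b}" .
  then show ?thesis by (simp add: I_def integral_unique)
qed

lemma RL_right_powr_by_parts:
  fixes \<psi> \<psi>' :: "real \<Rightarrow> real"
  assumes m: "m > 0"
    and "\<And>t. (\<psi> has_real_derivative \<psi>' t) (at t)"
    and "continuous_on UNIV \<psi>'" and "\<psi> b = 0"
  shows "RL_right_powr b m \<psi> y = - RL_right_powr b (m + 1) \<psi>' y"
proof (cases "y \<le> b")
  case True
  have "Gamma m \<noteq> 0" using Gamma_real_pos[OF m] by simp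
  then show ?thesis
    unfolding RL_right_powr_def integral_right_kernel_by_parts[OF m True assms(2-4)]
      Gamma_real_plus1[OF m] using m by simp
qed (simp add: RL_right_powr_def)

lemma RL_right_powr_one:
  fixes \<psi> \<psi>' :: "real \<Rightarrow> real"
  assumes "\<And>t. (\<psi> has_real_derivative \<psi>' t) (at t)" and "\<psi> b = 0" and "t \<le> b"
  shows "RL_right_powr b 1 \<psi>' t = - \<psi> t"
proof -
  have "integral {t..b} (\<lambda>x. (x - t) powr (1 - 1) * \<psi>' x) = integral {t..b} \<psi>'"
    by (rule integral_spike[of "{t}"]) auto
  also have "\<dots> = \<psi> b - \<psi> t"
    using assms(1,3) by (intro integral_unique fundamental_theorem_of_calculus)
      (auto simp: has_real_derivative_iff_has_vector_derivative has_vector_derivative_at_within)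
  finally show ?thesis
    using assms(2) by (simp add: RL_right_powr_def)
qed

lemma has_real_derivative_max_powr:
  fixes p s :: real
  assumes p: "p > 1"
  shows "((\<lambda>s. (max s 0) powr p) has_real_derivative p * (max s 0) powr (p - 1)) (at s)"
proof -
  consider "s > 0" | "s < 0" | "s = 0" by linarith
  then show ?thesis
  proof cases
    case 1
    have "((\<lambda>s. s powr p) has_real_derivative p * s powr (p - 1)) (at s)"
      using 1 by (rule has_real_derivative_powr)
    then have "((\<lambda>s. (max s 0) powr p) has_real_derivative p * s powr (p - 1)) (at s)"
      by (rule has_field_derivative_transform_within_open[of _ _ _ "{0<..}"]) (use 1 in auto)
    then show ?thesis using 1 by simp
  next
    case 2
    have "((\<lambda>s. 0) has_real_derivative p * (max s 0) powr (p - 1)) (at s)"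
      using 2 by simp
    then show ?thesis
      by (rule has_field_derivative_transform_within_open[of _ _ _ "{..<0}"]) (use 2 in auto)
  next
    case 3
    have "((\<lambda>h. (max h 0) powr p / h) \<longlongrightarrow> 0) (at 0)"
    proof (rule Lim_null_comparison)
      show "\<forall>\<^sub>F h in at 0. norm ((max h 0) powr p / h) \<le> \<bar>h\<bar> powr (p - 1)"
      proof (intro always_eventually allI)
        fix h :: real
        show "norm ((max h 0) powr p / h) \<le> \<bar>h\<bar> powr (p - 1)"
        proof (cases "h > 0")
          case True
          then have "h powr p / h = h powr (p - 1)" by (simp add: powr_diff)
          then show ?thesis using True by (simp add: max_def)
        qed (simp add: max_def)
      qed
      show "((\<lambda>h. \<bar>h\<bar> powr (p - 1)) \<longlongrightarrow> 0) (at (0::real))"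
        using p by (intro tendsto_zero_powrI tendsto_eq_intros) auto
    qed
    then show ?thesis
      using 3 p by (simp add: DERIV_def)
  qed
qed

lemma RL_right_powr_eq_integral_max_kernel:
  fixes \<psi> :: "real \<Rightarrow> real"
  assumes m: "m > 1" and "A \<le> y" and \<psi>: "continuous_on UNIV \<psi>"
  shows "RL_right_powr b m \<psi> y
       = (1 / Gamma m) * integral {A..b} (\<lambda>t. (max (t - y) 0) powr (m - 1) * \<psi> t)"
proof (cases "y \<le> b")
  case True
  have "(\<lambda>t. (max (t - y) 0) powr (m - 1) * \<psi> t) integrable_on {A..b}"
    using m by (intro integrable_continuous_interval continuous_intros continuous_on_powr'
        continuous_on_subset[OF \<psi>]) auto
  then have "integral {A..b} (\<lambda>t. (max (t - y) 0) powr (m - 1) * \<psi> t)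
      = integral {A..y} (\<lambda>t. (max (t - y) 0) powr (m - 1) * \<psi> t)
      + integral {y..b} (\<lambda>t. (max (t - y) 0) powr (m - 1) * \<psi> t)"
    by (rule Henstock_Kurzweil_Integration.integral_combine[OF \<open>A \<le> y\<close> True, symmetric])
  also have "integral {A..y} (\<lambda>t. (max (t - y) 0) powr (m - 1) * \<psi> t) = 0"
    by (subst integral_cong[where g = "\<lambda>_. 0"]) (auto simp: max_def)
  also have "integral {y..b} (\<lambda>t. (max (t - y) 0) powr (m - 1) * \<psi> t)
      = integral {y..b} (\<lambda>t. (t - y) powr (m - 1) * \<psi> t)"
    by (rule integral_cong) (auto simp: max_def)
  finally show ?thesis by (simp add: RL_right_powr_def)
next
  case False
  have "integral {A..b} (\<lambda>t. (max (t - y) 0) powr (m - 1) * \<psi> t) = 0"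
    by (subst integral_cong[where g = "\<lambda>_. 0"]) (use False in \<open>auto simp: max_def\<close>)
  then show ?thesis using False by (simp add: RL_right_powr_def)
qed

lemma has_real_derivative_integral_max_kernel:
  fixes \<psi> :: "real \<Rightarrow> real"
  assumes p: "p > 1" and \<psi>: "continuous_on UNIV \<psi>"
  shows "((\<lambda>y. integral {A..B} (\<lambda>t. (max (t - y) 0) powr p * \<psi> t)) has_real_derivative
           - p * integral {A..B} (\<lambda>t. (max (t - x) 0) powr (p - 1) * \<psi> t)) (at x)"
proof -
  define f where "f y t = (max (t - y) 0) powr p * \<psi> t" for y t
  define f' where "f' y t = - p * ((max (t - y) 0) powr (p - 1) * \<psi> t)" for y t
  have "((\<lambda>y. f y t) has_field_derivative f' y t) (at y within UNIV)" for y t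
  proof -
    have "((\<lambda>s. (max s 0) powr p) has_real_derivative p * (max (t - y) 0) powr (p - 1)) (at (t - y))"
      using has_real_derivative_max_powr[OF p] .
    moreover have "((\<lambda>y. t - y) has_real_derivative -1) (at y)"
      by (auto intro!: derivative_eq_intros)
    ultimately have "((\<lambda>y. (max (t - y) 0) powr p) has_real_derivative
        p * (max (t - y) 0) powr (p - 1) * -1) (at y)"
      by (rule DERIV_chain2)
    from DERIV_cmult_right[OF this, of "\<psi> t"] show ?thesis
      unfolding f_def f'_def by (rule DERIV_cong) (simp add: algebra_simps)
  qed
  moreover have "f y integrable_on cbox A B" for y
    unfolding f_def using p
    by (auto intro!: integrable_continuous_interval continuous_intros continuous_on_powr'
        continuous_on_subset[OF \<psi>])
  moreover have "continuous_on (UNIV \<times> cbox A B) (\<lambda>(y, t). f' y t)"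
    unfolding case_prod_unfold f'_def using p
    by (intro continuous_intros continuous_on_powr' continuous_on_compose2[OF \<psi>]) auto
  ultimately have "((\<lambda>y. integral (cbox A B) (f y)) has_field_derivative integral (cbox A B) (f' x))
      (at x within UNIV)"
    by (intro leibniz_rule_field_derivative) auto
  then show ?thesis
    by (simp add: f_def[abs_def] f'_def[abs_def])
qed

text \<open>Two integrations by parts raise the kernel to \<open>(t - y) powr (n + 1)\<close>, which is
  continuously differentiable in y; written with \<open>max (t - y) 0\<close> on a fixed interval
  [x - 1, b], it is differentiated under the integral sign.\<close>
lemma RL_right_powr_has_derivative:
  fixes \<psi>0 \<psi>1 \<psi>2 :: "real \<Rightarrow> real"
  assumes n: "n > 0"
    and d0: "\<And>t. (\<psi>0 has_real_derivative \<psi>1 t) (at t)"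
    and d1: "\<And>t. (\<psi>1 has_real_derivative \<psi>2 t) (at t)"
    and c2: "continuous_on UNIV \<psi>2" and "\<psi>0 b = 0" and "\<psi>1 b = 0"
  shows "(RL_right_powr b n \<psi>0 has_real_derivative RL_right_powr b n \<psi>1 x) (at x)"
proof -
  have c1: "continuous_on UNIV \<psi>1"
    using d1 by (meson DERIV_continuous continuous_at_imp_continuous_on)
  define c where "c = (n + 1) * Gamma (n + 1)"
  have "Gamma (n + 1 + 1) = c"
    unfolding c_def using n by (intro Gamma_real_plus1) simp
  have "Gamma (n + 1) > 0" "c > 0"
    unfolding c_def using n by simp_all
  then have "c \<noteq> 0" by simp
  define I where "I y = integral {x - 1..b} (\<lambda>t. (max (t - y) 0) powr (n + 1) * \<psi>2 t)" for y
  have RL0: "RL_right_powr b n \<psi>0 y = I y / c" if "y \<in> {x - 1<..}" for y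
  proof -
    have "RL_right_powr b n \<psi>0 y = - RL_right_powr b (n + 1) \<psi>1 y"
      by (rule RL_right_powr_by_parts[OF n d0 c1 \<open>\<psi>0 b = 0\<close>])
    also have "\<dots> = RL_right_powr b (n + 1 + 1) \<psi>2 y"
      using RL_right_powr_by_parts[OF _ d1 c2 \<open>\<psi>1 b = 0\<close>] n by simp
    also have "\<dots> = I y / c"
      using that n \<open>Gamma (n + 1 + 1) = c\<close>
      by (subst RL_right_powr_eq_integral_max_kernel[OF _ _ c2, of _ "x - 1"]) (auto simp: I_def add.commute)
    finally show ?thesis .
  qed
  have "(I has_real_derivative - (n + 1) * integral {x - 1..b} (\<lambda>t. (max (t - x) 0) powr n * \<psi>2 t)) (at x)"
    unfolding I_def using has_real_derivative_integral_max_kernel[of "n + 1" \<psi>2] n c2 by simp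
  moreover have "RL_right_powr b (n + 1) \<psi>2 x
      = (1 / Gamma (n + 1)) * integral {x - 1..b} (\<lambda>t. (max (t - x) 0) powr n * \<psi>2 t)"
    using n RL_right_powr_eq_integral_max_kernel[OF _ _ c2, of "n + 1" "x - 1" x b] by simp
  then have "integral {x - 1..b} (\<lambda>t. (max (t - x) 0) powr n * \<psi>2 t)
      = Gamma (n + 1) * RL_right_powr b (n + 1) \<psi>2 x"
    using \<open>Gamma (n + 1) > 0\<close> by simp
  ultimately have "(I has_real_derivative - c * RL_right_powr b (n + 1) \<psi>2 x) (at x)"
    unfolding c_def by (metis mult.assoc mult_minus_left)
  from DERIV_cdivide[OF this, of c]
  have "((\<lambda>y. I y / c) has_real_derivative - RL_right_powr b (n + 1) \<psi>2 x) (at x)"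
    using \<open>c \<noteq> 0\<close> by simp
  then have "(RL_right_powr b n \<psi>0 has_real_derivative - RL_right_powr b (n + 1) \<psi>2 x) (at x)"
    by (rule has_field_derivative_transform_within_open[of _ _ _ "{x - 1<..}"]) (auto simp: RL0)
  then show ?thesis
    by (simp add: RL_right_powr_by_parts[OF n d1 c2 \<open>\<psi>1 b = 0\<close>])
qed

section \<open>Fubini's theorem on a triangle\<close>

lemma set_integrable_lborel_if_absolutely_integrable:
  fixes f :: "real \<Rightarrow> real"
  assumes "f \<in> borel_measurable borel" and "S \<in> sets borel"
    and "f absolutely_integrable_on S"
  shows "set_integrable lborel S f"
proof -
  have "(\<lambda>x. indicator S x *\<^sub>R f x) \<in> borel_measurable lborel"
    using assms(1,2) by measurable
  then show ?thesis
    using assms(3) integrable_completion unfolding set_integrable_def by blast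
qed

lemma set_integrable_lborel_section:
  fixes K :: "real \<Rightarrow> real \<Rightarrow> real"
  assumes [measurable]: "(\<lambda>p. K (snd p) (fst p)) \<in> borel_measurable (lborel \<Otimes>\<^sub>M lborel)"
    and "(\<lambda>s. K s t) absolutely_integrable_on {t..x}"
  shows "set_integrable lborel {t..x} (\<lambda>s. K s t)"
proof (rule set_integrable_lborel_if_absolutely_integrable[OF _ _ assms(2)])
  have "(\<lambda>s. (\<lambda>p. K (snd p) (fst p)) (t, s)) \<in> borel_measurable lborel" by measurable
  then show "(\<lambda>s. K s t) \<in> borel_measurable borel" by simp
qed simp

lemma absolutely_integrable_if_AE_eq_integrable:
  fixes G \<Psi> :: "real \<Rightarrow> real"
  assumes \<Psi>: "integrable lborel \<Psi>" and eq: "AE s in lborel. \<Psi> s = indicator S s * G s"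
  shows "G absolutely_integrable_on S" and "integral S G = (\<integral>s. \<Psi> s \<partial>lborel)"
proof -
  have [measurable]: "\<Psi> \<in> borel_measurable lborel"
    using \<Psi> by (rule borel_measurable_integrable)
  have \<Psi>_leb: "integrable lebesgue \<Psi>"
    using \<Psi> integrable_completion by blast
  have eq_leb: "AE s in lebesgue. \<Psi> s = indicator S s *\<^sub>R G s"
    using AE_completion[OF eq] by simp
  have meas: "(\<lambda>s. indicator S s *\<^sub>R G s) \<in> borel_measurable lebesgue"
    using measurable_completion eq_leb by (rule borel_measurable_AE) simp
  show G: "G absolutely_integrable_on S"
    unfolding set_integrable_def using integrable_cong_AE[OF _ meas eq_leb] \<Psi>_leb
    by (simp add: measurable_completion)
  have "integral S G = (\<integral>s. indicator S s *\<^sub>R G s \<partial>lebesgue)"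
    using set_lebesgue_integral_eq_integral(2)[OF G] by (simp add: set_lebesgue_integral_def)
  also have "\<dots> = (\<integral>s. \<Psi> s \<partial>lebesgue)"
    using eq_leb by (intro integral_cong_AE[OF meas]) (auto simp: measurable_completion)
  also have "\<dots> = (\<integral>s. \<Psi> s \<partial>lborel)"
    by (simp add: integral_completion)
  finally show "integral S G = (\<integral>s. \<Psi> s \<partial>lborel)" .
qed

definition triangle_integrand ::
    "real \<Rightarrow> real \<Rightarrow> (real \<Rightarrow> real \<Rightarrow> real) \<Rightarrow> (real \<Rightarrow> real) \<Rightarrow> real \<Rightarrow> real \<Rightarrow> real" where
  "triangle_integrand a x K h t s = (if a \<le> t \<and> t \<le> s \<and> s \<le> x then K s t * h t else 0)"

lemma norm_triangle_integrand:
  "norm (triangle_integrand a x K h t s) = triangle_integrand a x (\<lambda>s t. \<bar>K s t\<bar>) (\<lambda>t. \<bar>h t\<bar>) t s"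
  by (simp add: triangle_integrand_def abs_mult)

lemma integral_triangle_integrand_row:
  fixes K :: "real \<Rightarrow> real \<Rightarrow> real" and h :: "real \<Rightarrow> real"
  assumes "(\<lambda>p. K (snd p) (fst p)) \<in> borel_measurable (lborel \<Otimes>\<^sub>M lborel)"
    and K_int: "t \<in> {a..x} \<Longrightarrow> (\<lambda>s. K s t) absolutely_integrable_on {t..x}"
  shows "integrable lborel (triangle_integrand a x K h t)"
    and "(\<integral>s. triangle_integrand a x K h t s \<partial>lborel)
         = indicator {a..x} t * (h t * integral {t..x} (\<lambda>s. K s t))"
proof -
  have "integrable lborel (triangle_integrand a x K h t) \<and>
      (\<integral>s. triangle_integrand a x K h t s \<partial>lborel) = indicator {a..x} t * (h t * integral {t..x} (\<lambda>s. K s t))"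
  proof (cases "t \<in> {a..x}")
    case True
    have row: "triangle_integrand a x K h t = (\<lambda>s. h t * (indicator {t..x} s *\<^sub>R K s t))"
      using True by (auto simp: triangle_integrand_def fun_eq_iff indicator_def)
    have "set_integrable lborel {t..x} (\<lambda>s. K s t)"
      using assms(1) K_int[OF True] by (rule set_integrable_lborel_section)
    then have "integrable lborel (\<lambda>s. indicator {t..x} s *\<^sub>R K s t)"
      and "(LINT s:{t..x}|lborel. K s t) = integral {t..x} (\<lambda>s. K s t)"
      by (simp_all add: set_integrable_def set_borel_integral_eq_integral(2))
    then show ?thesis
      using True by (simp add: row set_lebesgue_integral_def)
  next
    case False
    then have "triangle_integrand a x K h t = (\<lambda>s. 0)"
      by (auto simp: triangle_integrand_def fun_eq_iff)
    then show ?thesis using False by simp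
  qed
  then show "integrable lborel (triangle_integrand a x K h t)"
    and "(\<integral>s. triangle_integrand a x K h t s \<partial>lborel) = indicator {a..x} t * (h t * integral {t..x} (\<lambda>s. K s t))"
    by auto
qed

lemma integral_triangle_integrand_column:
  fixes K :: "real \<Rightarrow> real \<Rightarrow> real" and h :: "real \<Rightarrow> real"
  assumes "integrable lborel (\<lambda>t. triangle_integrand a x K h t s)"
  shows "(\<integral>t. triangle_integrand a x K h t s \<partial>lborel) = indicator {a..x} s * integral {a..s} (\<lambda>t. K s t * h t)"
proof (cases "s \<in> {a..x}")
  case True
  then have column: "(\<lambda>t. triangle_integrand a x K h t s) = (\<lambda>t. indicator {a..s} t *\<^sub>R (K s t * h t))"
    by (auto simp: triangle_integrand_def fun_eq_iff indicator_def)
  then have "set_integrable lborel {a..s} (\<lambda>t. K s t * h t)"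
    using assms by (simp add: set_integrable_def)
  from set_borel_integral_eq_integral(2)[OF this] show ?thesis
    using True by (simp add: column set_lebesgue_integral_def)
next
  case False
  then have "(\<lambda>t. triangle_integrand a x K h t s) = (\<lambda>t. 0)"
    by (auto simp: triangle_integrand_def fun_eq_iff)
  then show ?thesis using False by simp
qed

lemma triangle_integrand_integrable:
  fixes K :: "real \<Rightarrow> real \<Rightarrow> real" and h :: "real \<Rightarrow> real"
  assumes K[measurable]: "(\<lambda>p. K (snd p) (fst p)) \<in> borel_measurable (lborel \<Otimes>\<^sub>M lborel)"
    and h[measurable]: "h \<in> borel_measurable borel" and "h absolutely_integrable_on {a..x}"
    and K_int: "\<And>t. t \<in> {a..x} \<Longrightarrow> (\<lambda>s. K s t) absolutely_integrable_on {t..x}"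
    and K_bound: "\<And>t. t \<in> {a..x} \<Longrightarrow> integral {t..x} (\<lambda>s. \<bar>K s t\<bar>) \<le> M"
  shows "integrable (lborel \<Otimes>\<^sub>M lborel) (\<lambda>(t, s). triangle_integrand a x K h t s)"
proof (rule lborel_pair.Fubini_integrable)
  show "(\<lambda>(t, s). triangle_integrand a x K h t s) \<in> borel_measurable (lborel \<Otimes>\<^sub>M lborel)"
    unfolding triangle_integrand_def by measurable
  show "AE t in lborel. integrable lborel (\<lambda>s. case (t, s) of (t, s) \<Rightarrow> triangle_integrand a x K h t s)"
    using integral_triangle_integrand_row(1)[OF K K_int] by simp
  have abs_K: "(\<lambda>p. \<bar>K (snd p) (fst p)\<bar>) \<in> borel_measurable (lborel \<Otimes>\<^sub>M lborel)"
    by measurable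
  have "integrable lborel (\<lambda>t. \<integral>s. norm (triangle_integrand a x K h t s) \<partial>lborel)"
  proof (rule Bochner_Integration.integrable_bound)
    show "integrable lborel (\<lambda>t. M * (indicator {a..x} t *\<^sub>R h t))"
      using set_integrable_lborel_if_absolutely_integrable[OF h _ assms(3)]
      unfolding set_integrable_def by (intro integrable_mult_right) simp
    have "\<bar>indicator {a..x} t * (\<bar>h t\<bar> * integral {t..x} (\<lambda>s. \<bar>K s t\<bar>))\<bar>
        \<le> \<bar>M * (indicator {a..x} t * h t)\<bar>" for t
    proof (cases "t \<in> {a..x}")
      case True
      have "0 \<le> integral {t..x} (\<lambda>s. \<bar>K s t\<bar>)"
        using K_int[OF True] by (intro integral_nonneg) (auto simp: absolutely_integrable_on_def)
      moreover have "\<bar>h t\<bar> * integral {t..x} (\<lambda>s. \<bar>K s t\<bar>) \<le> \<bar>h t\<bar> * M"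
        by (rule mult_left_mono[OF K_bound[OF True]]) simp
      moreover have "0 \<le> M"
        using \<open>0 \<le> integral {t..x} (\<lambda>s. \<bar>K s t\<bar>)\<close> K_bound[OF True] by linarith
      ultimately show ?thesis
        using True by (simp add: abs_mult mult.commute)
    qed simp
    moreover have "(\<integral>s. norm (triangle_integrand a x K h t s) \<partial>lborel)
        = indicator {a..x} t * (\<bar>h t\<bar> * integral {t..x} (\<lambda>s. \<bar>K s t\<bar>))" for t
      unfolding norm_triangle_integrand
      by (intro integral_triangle_integrand_row(2)[OF abs_K]) (use set_integrable_abs[OF K_int] in auto)
    ultimately show "AE t in lborel. norm (\<integral>s. norm (triangle_integrand a x K h t s) \<partial>lborel)
        \<le> norm (M * (indicator {a..x} t *\<^sub>R h t))"
      by (intro AE_I2) simp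
  qed (simp add: triangle_integrand_def)
  then show "integrable lborel (\<lambda>t. \<integral>s. norm (case (t, s) of (t, s) \<Rightarrow> triangle_integrand a x K h t s) \<partial>lborel)"
    by simp
qed

lemma triangle_fubini:
  fixes K :: "real \<Rightarrow> real \<Rightarrow> real" and h :: "real \<Rightarrow> real"
  assumes K[measurable]: "(\<lambda>p. K (snd p) (fst p)) \<in> borel_measurable (lborel \<Otimes>\<^sub>M lborel)"
    and h[measurable]: "h \<in> borel_measurable borel" and "h absolutely_integrable_on {a..x}"
    and K_int: "\<And>t. t \<in> {a..x} \<Longrightarrow> (\<lambda>s. K s t) absolutely_integrable_on {t..x}"
    and K_bound: "\<And>t. t \<in> {a..x} \<Longrightarrow> integral {t..x} (\<lambda>s. \<bar>K s t\<bar>) \<le> M"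
  shows "(\<lambda>s. integral {a..s} (\<lambda>t. K s t * h t)) integrable_on {a..x}"
    and "integral {a..x} (\<lambda>s. integral {a..s} (\<lambda>t. K s t * h t))
         = integral {a..x} (\<lambda>t. h t * integral {t..x} (\<lambda>s. K s t))"
proof -
  have f: "integrable (lborel \<Otimes>\<^sub>M lborel) (\<lambda>(t, s). triangle_integrand a x K h t s)"
    using triangle_integrand_integrable[OF assms] by simp
  have "AE s in lborel. (\<integral>t. triangle_integrand a x K h t s \<partial>lborel)
      = indicator {a..x} s * integral {a..s} (\<lambda>t. K s t * h t)"
    using lborel_pair.AE_integrable_snd[OF f]
    by (rule AE_mp, intro AE_I2 impI) (rule integral_triangle_integrand_column)
  note columns = absolutely_integrable_if_AE_eq_integrable[OF lborel_pair.integrable_snd[OF f] this]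
  note rows = absolutely_integrable_if_AE_eq_integrable[OF lborel_pair.integrable_fst[OF f]
      AE_I2[OF integral_triangle_integrand_row(2)[OF K K_int]]]
  show "(\<lambda>s. integral {a..s} (\<lambda>t. K s t * h t)) integrable_on {a..x}"
    using columns(1) set_lebesgue_integral_eq_integral(1) by blast
  show "integral {a..x} (\<lambda>s. integral {a..s} (\<lambda>t. K s t * h t))
      = integral {a..x} (\<lambda>t. h t * integral {t..x} (\<lambda>s. K s t))"
    using columns(2) rows(2) lborel_pair.Fubini_integral[OF f] by simp
qed

section \<open>The left Riemann--Liouville integral\<close>

definition RL_left_powr :: "real \<Rightarrow> real \<Rightarrow> (real \<Rightarrow> real) \<Rightarrow> real \<Rightarrow> real" where
  "RL_left_powr a m f x = (1 / Gamma m) * integral {a..x} (\<lambda>t. (x - t) powr (m - 1) * f t)"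

lemma triangle_fubini_right_kernel:
  fixes F X :: "real \<Rightarrow> real"
  assumes m: "m > 0" and F: "continuous_on UNIV F" and X: "continuous_on UNIV X"
  shows "integral {a..b} (\<lambda>s. integral {a..s} (\<lambda>t. (s - t) powr (m - 1) * F t) * X s)
       = integral {a..b} (\<lambda>t. F t * integral {t..b} (\<lambda>s. (s - t) powr (m - 1) * X s))"
proof -
  define K where "K s t = (s - t) powr (m - 1) * X s" for s t
  have [measurable]: "X \<in> borel_measurable borel" "F \<in> borel_measurable borel"
    using X F by (simp_all add: borel_measurable_continuous_onI)
  have "(\<lambda>p. K (snd p) (fst p)) \<in> borel_measurable (lborel \<Otimes>\<^sub>M lborel)"
    unfolding K_def by measurable
  moreover have "F absolutely_integrable_on {a..b}"
    using F by (intro absolutely_integrable_continuous_real continuous_on_subset[OF F]) auto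
  moreover have "(\<lambda>s. K s t) absolutely_integrable_on {t..b}" for t
    unfolding K_def using absolutely_integrable_continuous_mult[OF continuous_on_subset[OF X]
      absolutely_integrable_right_kernel[OF m]] by (simp add: mult.commute)
  moreover obtain B where "B > 0" and B: "\<And>x. x \<in> {a..b} \<Longrightarrow> \<bar>X x\<bar> \<le> B"
    using continuous_on_Icc_abs_bound[OF continuous_on_subset[OF X]] by blast
  moreover have "integral {t..b} (\<lambda>s. \<bar>K s t\<bar>) \<le> B * (b - a) powr m / m" if "t \<in> {a..b}" for t
  proof -
    have "integral {t..b} (\<lambda>s. \<bar>K s t\<bar>) \<le> B * (b - t) powr m / m"
      unfolding K_def using that B
      by (intro integral_abs_right_kernel_mult_le[OF m] continuous_on_subset[OF X]) auto
    also have "\<dots> \<le> B * (b - a) powr m / m"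
      using that \<open>B > 0\<close> m by (intro divide_right_mono mult_left_mono powr_mono2) auto
    finally show ?thesis .
  qed
  ultimately have "integral {a..b} (\<lambda>s. integral {a..s} (\<lambda>t. K s t * F t))
      = integral {a..b} (\<lambda>t. F t * integral {t..b} (\<lambda>s. K s t))"
    by (intro triangle_fubini(2)) auto
  moreover have "(\<lambda>t. K s t * F t) = (\<lambda>t. X s * ((s - t) powr (m - 1) * F t))" for s
    by (simp add: K_def fun_eq_iff mult_ac)
  ultimately show ?thesis
    by (simp add: K_def mult.commute)
qed

lemma RL_left_powr_duality:
  fixes F X :: "real \<Rightarrow> real"
  assumes m: "m > 0" and F: "continuous_on {a..b} F" and X: "continuous_on {a..b} X"
  shows "integral {a..b} (\<lambda>x. RL_left_powr a m F x * X x)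
       = integral {a..b} (\<lambda>t. F t * RL_right_powr b m X t)"
proof -
  \<comment> \<open>continuous extensions to the real line, which are Borel measurable\<close>
  define F' where "F' = ext_cont F a b"
  define X' where "X' = ext_cont X a b"
  have "continuous_on UNIV F'" and "continuous_on UNIV X'"
    using F X by (auto simp: F'_def X'_def intro!: continuous_on_ext_cont)
  from triangle_fubini_right_kernel[OF m this, of a b]
  have fubini: "integral {a..b} (\<lambda>x. (1 / Gamma m) * (integral {a..x} (\<lambda>t. (x - t) powr (m - 1) * F' t) * X' x))
      = integral {a..b} (\<lambda>t. (1 / Gamma m) * (F' t * integral {t..b} (\<lambda>s. (s - t) powr (m - 1) * X' s)))"
    by simp
  have left: "RL_left_powr a m F x * X x
      = (1 / Gamma m) * (integral {a..x} (\<lambda>t. (x - t) powr (m - 1) * F' t) * X' x)"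
    if "x \<in> {a..b}" for x
    using that by (auto simp: RL_left_powr_def F'_def X'_def intro!: integral_cong)
  have right: "F t * RL_right_powr b m X t
      = (1 / Gamma m) * (F' t * integral {t..b} (\<lambda>s. (s - t) powr (m - 1) * X' s))"
    if "t \<in> {a..b}" for t
    using that by (auto simp: RL_right_powr_def F'_def X'_def intro!: integral_cong)
  have "integral {a..b} (\<lambda>x. RL_left_powr a m F x * X x)
      = integral {a..b} (\<lambda>x. (1 / Gamma m) * (integral {a..x} (\<lambda>t. (x - t) powr (m - 1) * F' t) * X' x))"
    using left by (rule integral_cong)
  also have "\<dots> = integral {a..b} (\<lambda>t. F t * RL_right_powr b m X t)"
    unfolding fubini using right by (intro integral_cong) simp
  finally show ?thesis .
qed

lemma RL_left_pt_one:
  fixes F :: "real \<Rightarrow> real"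
  assumes "continuous_on {a..x} F" and "F a = 0"
  shows "RL_left_pt a 1 F x = F x"
proof -
  have "hk_int a x F (\<lambda>_. 1) = F x * 1 - F a * 1 - integral {a..x} (\<lambda>t. F t * 0)"
    using assms(1) by (rule hk_int_eq_integral) auto
  then show ?thesis
    using assms(2) by (simp add: RL_left_pt_def rl_kernel_def)
qed

lemma RL_left_pt_eq_RL_left_powr:
  fixes F :: "real \<Rightarrow> real"
  assumes n: "n > 1" and F: "continuous_on {a..x} F" and "F a = 0" and "a \<le> x"
  shows "RL_left_pt a n F x = RL_left_powr a (n - 1) F x"
proof -
  define g where "g t = (x - t) powr (n - 1)" for t
  define g' where "g' t = - ((n - 1) * (x - t) powr (n - 1 - 1))" for t
  have "g' = (\<lambda>t. (- (n - 1)) * (x - t) powr (n - 1 - 1))"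
    by (simp add: g'_def fun_eq_iff algebra_simps)
  then have "g' absolutely_integrable_on {a..x}"
    using set_integrable_mult_right[OF absolutely_integrable_left_kernel[of "n - 1" a x]] n by simp
  moreover have "(g' has_integral (g r - g l)) {l..r}" if "l \<le> r" "r \<le> x" for l r
    using has_integral_left_kernel_deriv[of "n - 1" l r x] that n by (simp add: g_def g'_def[abs_def])
  ultimately have "hk_int a x F g = F x * g x - F a * g a - integral {a..x} (\<lambda>t. F t * g' t)"
    using F by (intro hk_int_eq_integral) auto
  also have "\<dots> = (n - 1) * integral {a..x} (\<lambda>t. (x - t) powr (n - 1 - 1) * F t)"
  proof -
    have "(\<lambda>t. F t * g' t) = (\<lambda>t. - ((n - 1) * ((x - t) powr (n - 1 - 1) * F t)))"
      by (simp add: g'_def fun_eq_iff)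
    then show ?thesis
      using \<open>F a = 0\<close> n by (simp add: g_def)
  qed
  finally have "hk_int a x F g = (n - 1) * integral {a..x} (\<lambda>t. (x - t) powr (n - 1 - 1) * F t)" .
  moreover have "(\<lambda>t. rl_kernel n (x - t)) = g"
    using n by (auto simp: rl_kernel_def g_def)
  moreover have "Gamma n = (n - 1) * Gamma (n - 1)"
    using n Gamma_real_plus1[of "n - 1"] by simp
  moreover have "Gamma (n - 1) \<noteq> 0"
    using n Gamma_real_pos[of "n - 1"] by fastforce
  ultimately show ?thesis
    using n by (simp add: RL_left_pt_def RL_left_powr_def)
qed

lemma RL_left_L1_eq_RL_left_powr: "RL_left_L1 a n h = RL_left_powr a n h"
proof
  fix x
  have "integral {a..x} (\<lambda>t. rl_kernel n (x - t) * h t)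
      = integral {a..x} (\<lambda>t. (x - t) powr (n - 1) * h t)"
    by (rule integral_spike[of "{x}"]) (auto simp: rl_kernel_def)
  then show "RL_left_L1 a n h x = RL_left_powr a n h x"
    by (simp add: RL_left_L1_def RL_left_powr_def)
qed

lemma absolutely_integrable_borel_representative:
  fixes h :: "real \<Rightarrow> real"
  assumes "h absolutely_integrable_on S"
  obtains g N where "g \<in> borel_measurable borel" "negligible N" "\<And>x. x \<in> S - N \<Longrightarrow> h x = g x"
proof -
  have "(\<lambda>x. indicator S x *\<^sub>R h x) \<in> borel_measurable lebesgue"
    using assms unfolding set_integrable_def by (rule borel_measurable_integrable)
  then obtain g where g: "g \<in> borel_measurable lborel"
    and "AE x in lborel. indicator S x *\<^sub>R h x = g x"
    using completion_ex_borel_measurable_real by blast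
  then have "AE x in lebesgue. indicator S x *\<^sub>R h x = g x"
    by (intro AE_completion)
  then obtain N where N: "negligible N" "{x. indicator S x *\<^sub>R h x \<noteq> g x} \<subseteq> N"
    unfolding eventually_ae_filter_negligible by blast
  show ?thesis
  proof (rule that[OF _ N(1)])
    show "g \<in> borel_measurable borel" using g by simp
    fix x assume x: "x \<in> S - N"
    then have "indicator S x *\<^sub>R h x = g x" using N(2) by blast
    then show "h x = g x" using x by simp
  qed
qed

text \<open>Both sides are double integrals of g over the triangle a \<le> t \<le> s \<le> x whose
  kernels integrate in s to the same value (x - t) powr n / n.\<close>
lemma integral_RL_left_powr_borel:
  fixes g :: "real \<Rightarrow> real"
  assumes n: "n > 0" and g[measurable]: "g \<in> borel_measurable borel"
    and g_int: "g absolutely_integrable_on {a..x}"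
  shows "RL_left_powr a n g integrable_on {a..x}"
    and "integral {a..x} (RL_left_powr a n g) = RL_left_powr a n (\<lambda>s. integral {a..s} g) x"
proof -
  define M where "M = (x - a) powr n / n"
  have kernel_bound: "(x - t) powr n / n \<le> M" if "t \<in> {a..x}" for t
    unfolding M_def using that n by (intro divide_right_mono powr_mono2) auto
  have right: "integral {t..x} (\<lambda>s. (s - t) powr (n - 1)) = (x - t) powr n / n"
    and left: "integral {t..x} (\<lambda>s. (x - s) powr (n - 1)) = (x - t) powr n / n"
    if "t \<in> {a..x}" for t
    using has_integral_right_kernel[OF n, of t x] has_integral_left_kernel[OF n, of t x] that
    by (auto intro: integral_unique)
  have fubini_right:
    "(\<lambda>s. integral {a..s} (\<lambda>t. (s - t) powr (n - 1) * g t)) integrable_on {a..x}"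
    "integral {a..x} (\<lambda>s. integral {a..s} (\<lambda>t. (s - t) powr (n - 1) * g t))
      = integral {a..x} (\<lambda>t. g t * integral {t..x} (\<lambda>s. (s - t) powr (n - 1)))"
    using right kernel_bound absolutely_integrable_right_kernel[OF n]
    by (intro triangle_fubini[OF _ g g_int, of _ M]; simp; measurable)+
  have fubini_left:
    "integral {a..x} (\<lambda>s. integral {a..s} (\<lambda>t. (x - s) powr (n - 1) * g t))
      = integral {a..x} (\<lambda>t. g t * integral {t..x} (\<lambda>s. (x - s) powr (n - 1)))"
    using left kernel_bound absolutely_integrable_left_kernel[OF n]
    by (intro triangle_fubini(2)[OF _ g g_int, of _ M]; simp; measurable)
  show "RL_left_powr a n g integrable_on {a..x}"
    using integrable_on_mult_right[OF fubini_right(1), of "1 / Gamma n"]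
    by (simp add: RL_left_powr_def[abs_def])
  have "integral {a..x} (\<lambda>s. integral {a..s} (\<lambda>t. (s - t) powr (n - 1) * g t))
      = integral {a..x} (\<lambda>s. (x - s) powr (n - 1) * integral {a..s} g)"
    unfolding fubini_right(2) using fubini_left
    by (auto simp: left right intro!: integral_cong)
  then show "integral {a..x} (RL_left_powr a n g) = RL_left_powr a n (\<lambda>s. integral {a..s} g) x"
    by (simp only: RL_left_powr_def[abs_def] integral_mult_right)
qed

lemma integral_RL_left_powr:
  fixes h :: "real \<Rightarrow> real"
  assumes n: "n > 0" and h: "h absolutely_integrable_on {a..x}"
  shows "RL_left_powr a n h integrable_on {a..x}"
    and "integral {a..x} (RL_left_powr a n h) = RL_left_powr a n (\<lambda>s. integral {a..s} h) x"
proof -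
  obtain g N where g: "g \<in> borel_measurable borel" and N: "negligible N"
    and hg: "\<And>s. s \<in> {a..x} - N \<Longrightarrow> h s = g s"
    using absolutely_integrable_borel_representative[OF h] by blast
  have g_int: "g absolutely_integrable_on {a..x}"
    using hg by (intro absolutely_integrable_spike[OF h N]) auto
  have RL_hg: "RL_left_powr a n h s = RL_left_powr a n g s" if "s \<in> {a..x}" for s
    unfolding RL_left_powr_def using that hg by (auto intro!: integral_spike[OF N])
  have int_hg: "integral {a..s} h = integral {a..s} g" if "s \<in> {a..x}" for s
    using that hg by (auto intro!: integral_spike[OF N])
  show "RL_left_powr a n h integrable_on {a..x}"
    using integral_RL_left_powr_borel(1)[OF n g g_int] by (rule integrable_eq) (simp add: RL_hg)
  have "integral {a..x} (RL_left_powr a n h) = integral {a..x} (RL_left_powr a n g)"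
    using RL_hg by (intro integral_cong) auto
  also have "\<dots> = RL_left_powr a n (\<lambda>s. integral {a..s} g) x"
    by (rule integral_RL_left_powr_borel(2)[OF n g g_int])
  also have "\<dots> = RL_left_powr a n (\<lambda>s. integral {a..s} h) x"
    using int_hg by (auto simp: RL_left_powr_def intro!: integral_cong)
  finally show "integral {a..x} (RL_left_powr a n h) = RL_left_powr a n (\<lambda>s. integral {a..s} h) x" .
qed

lemma abs_RL_left_powr_le:
  fixes f :: "real \<Rightarrow> real"
  assumes n: "n > 0" and "a \<le> x" and f: "continuous_on {a..x} f"
    and bound: "\<And>s. s \<in> {a..x} \<Longrightarrow> \<bar>f s\<bar> \<le> A"
  shows "\<bar>RL_left_powr a n f x\<bar> \<le> A * (x - a) powr n / (n * Gamma n)"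
proof -
  have kernel: "((\<lambda>s. (x - s) powr (n - 1)) has_integral (x - a) powr n / n) {a..x}"
    using has_integral_left_kernel[OF n \<open>a \<le> x\<close>] .
  have "norm (integral {a..x} (\<lambda>s. (x - s) powr (n - 1) * f s)) \<le> integral {a..x} (\<lambda>s. A * (x - s) powr (n - 1))"
  proof (rule integral_norm_bound_integral)
    show "(\<lambda>s. (x - s) powr (n - 1) * f s) integrable_on {a..x}"
      using absolutely_integrable_continuous_mult[OF f absolutely_integrable_left_kernel[OF n]]
        set_lebesgue_integral_eq_integral(1) by (simp add: mult.commute)
    show "(\<lambda>s. A * (x - s) powr (n - 1)) integrable_on {a..x}"
      using kernel by (intro integrable_on_mult_right) (auto simp: integrable_on_def)
    show "norm ((x - s) powr (n - 1) * f s) \<le> A * (x - s) powr (n - 1)" if "s \<in> {a..x}" for s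
      using mult_right_mono[OF bound[OF that], of "(x - s) powr (n - 1)"]
      by (simp add: abs_mult mult.commute)
  qed
  also have "\<dots> = A * ((x - a) powr n / n)"
    using integral_unique[OF kernel] by simp
  finally show ?thesis
    using Gamma_real_pos[OF n] by (simp add: RL_left_powr_def abs_mult field_simps)
qed

lemma RL_left_powr_diff:
  fixes f g :: "real \<Rightarrow> real"
  assumes n: "n > 0" and "continuous_on {a..x} f" and "continuous_on {a..x} g"
  shows "RL_left_powr a n (\<lambda>s. f s - g s) x = RL_left_powr a n f x - RL_left_powr a n g x"
proof -
  have "(\<lambda>s. (x - s) powr (n - 1) * f s) integrable_on {a..x}"
    and "(\<lambda>s. (x - s) powr (n - 1) * g s) integrable_on {a..x}"
    using absolutely_integrable_continuous_mult[OF assms(2) absolutely_integrable_left_kernel[OF n]]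
      absolutely_integrable_continuous_mult[OF assms(3) absolutely_integrable_left_kernel[OF n]]
      set_lebesgue_integral_eq_integral(1) by (simp_all add: mult.commute)
  from integral_diff[OF this] show ?thesis
    by (simp add: RL_left_powr_def right_diff_distrib)
qed

section \<open>Alexiewicz limits of Riemann--Liouville integrals\<close>

lemma A_dist_ge:
  fixes h F :: "real \<Rightarrow> real"
  assumes "continuous_on {a..b} (\<lambda>x. integral {a..x} h - F x)" and "x \<in> {a..b}"
  shows "\<bar>integral {a..x} h - F x\<bar> \<le> A_dist a b h F"
proof -
  have "bounded ((\<lambda>x. integral {a..x} h - F x) ` {a..b})"
    using assms(1) compact_Icc compact_continuous_image compact_imp_bounded by blast
  then obtain B where "\<And>x. x \<in> {a..b} \<Longrightarrow> \<bar>integral {a..x} h - F x\<bar> \<le> B"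
    unfolding bounded_pos by fastforce
  then have "bdd_above ((\<lambda>x. \<bar>integral {a..x} h - F x\<bar>) ` {a..b})"
    by (intro bdd_aboveI2[where M = B])
  then show ?thesis
    unfolding A_dist_def using assms(2) by (rule cSUP_upper2) simp
qed

lemma A_dist_tendsto_zero:
  fixes hs :: "nat \<Rightarrow> real \<Rightarrow> real" and F :: "real \<Rightarrow> real"
  assumes "a \<le> b" and bound: "\<And>k x. x \<in> {a..b} \<Longrightarrow> \<bar>integral {a..x} (hs k) - F x\<bar> \<le> B k"
    and "B \<longlonglongrightarrow> 0"
  shows "(\<lambda>k. A_dist a b (hs k) F) \<longlonglongrightarrow> 0"
proof (rule tendsto_sandwich[OF _ _ tendsto_const \<open>B \<longlonglongrightarrow> 0\<close>])
  have bdd: "bdd_above ((\<lambda>x. \<bar>integral {a..x} (hs k) - F x\<bar>) ` {a..b})" for k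
    using bound by (intro bdd_aboveI2[where M = "B k"])
  show "\<forall>\<^sub>F k in sequentially. 0 \<le> A_dist a b (hs k) F"
    using \<open>a \<le> b\<close> bdd unfolding A_dist_def by (auto intro!: always_eventually cSUP_upper2)
  show "\<forall>\<^sub>F k in sequentially. A_dist a b (hs k) F \<le> B k"
    using \<open>a \<le> b\<close> bound unfolding A_dist_def by (auto intro!: always_eventually cSUP_least)
qed

text \<open>Approximate F uniformly by a polynomial P k and take its derivative: then
  the primitive of P' k is P k - P k a, within 2 / (k + 1) of F because F a = 0.\<close>
lemma continuous_Alexiewicz_approximation:
  fixes F :: "real \<Rightarrow> real"
  assumes "a \<le> b" and F: "continuous_on {a..b} F" and "F a = 0"
  obtains fs where "\<And>k. continuous_on UNIV (fs k)" and "(\<lambda>k. A_dist a b (fs k) F) \<longlonglongrightarrow> 0"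
proof -
  have "\<forall>k. \<exists>p. polynomial_function p \<and> (\<forall>x\<in>{a..b}. norm (F x - p x) < 1 / (real k + 1))"
    using Stone_Weierstrass_polynomial_function[OF compact_Icc F] by simp
  then obtain P where P: "\<And>k. polynomial_function (P k)"
    and P_approx: "\<And>k x. x \<in> {a..b} \<Longrightarrow> \<bar>F x - P k x\<bar> < 1 / (real k + 1)"
    by (metis real_norm_def)
  have "\<forall>k. \<exists>p'. real_polynomial_function p' \<and> (\<forall>x. (P k has_real_derivative p' x) (at x))"
    using has_real_derivative_polynomial_function P real_polynomial_function_eq by metis
  then obtain P' where P': "\<And>k. real_polynomial_function (P' k)"
    and P_deriv: "\<And>k x. (P k has_real_derivative P' k x) (at x)"
    by metis
  show ?thesis
  proof (rule that)
    show "continuous_on UNIV (P' k)" for k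
      using P' continuous_on_polymonial_function real_polynomial_function_eq by blast
    have "\<bar>integral {a..x} (P' k) - F x\<bar> \<le> 2 / (real k + 1)" if x: "x \<in> {a..b}" for k x
    proof -
      have "integral {a..x} (P' k) = P k x - P k a"
        using x P_deriv by (intro integral_unique fundamental_theorem_of_calculus)
          (auto simp: has_real_derivative_iff_has_vector_derivative has_vector_derivative_at_within)
      then show ?thesis
        using P_approx[OF x, of k] P_approx[of a k] \<open>a \<le> b\<close> \<open>F a = 0\<close> by simp
    qed
    moreover have "(\<lambda>k. 2 / (real k + 1)) \<longlonglongrightarrow> 0"
      using tendsto_mult_right_zero[OF LIMSEQ_inverse_real_of_nat, of 2]
      by (simp add: divide_inverse add.commute)
    ultimately show "(\<lambda>k. A_dist a b (P' k) F) \<longlonglongrightarrow> 0"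
      by (rule A_dist_tendsto_zero[OF \<open>a \<le> b\<close>])
  qed
qed

lemma RL_left_L1_Alexiewicz_estimate:
  fixes h F :: "real \<Rightarrow> real"
  assumes n: "n > 0" and h: "h absolutely_integrable_on {a..b}" and F: "continuous_on {a..b} F"
    and x: "x \<in> {a..b}"
  shows "\<bar>integral {a..x} (RL_left_L1 a n h) - RL_left_powr a n F x\<bar>
       \<le> A_dist a b h F * (b - a) powr n / (n * Gamma n)"
proof -
  define H where "H s = integral {a..s} h" for s
  have H: "continuous_on {a..b} H"
    unfolding H_def using h set_lebesgue_integral_eq_integral(1)
    by (intro indefinite_integral_continuous_1) blast
  have close: "\<bar>H s - F s\<bar> \<le> A_dist a b h F" if "s \<in> {a..b}" for s
    unfolding H_def using that H F by (intro A_dist_ge) (auto simp: H_def intro: continuous_intros)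
  have "integral {a..x} (RL_left_L1 a n h) = RL_left_powr a n H x"
    using integral_RL_left_powr(2)[OF n set_integrable_subset[OF h]] x
    by (auto simp: RL_left_L1_eq_RL_left_powr H_def[abs_def])
  moreover have "RL_left_powr a n (\<lambda>s. H s - F s) x = RL_left_powr a n H x - RL_left_powr a n F x"
    using x by (intro RL_left_powr_diff[OF n] continuous_on_subset[OF H] continuous_on_subset[OF F]) auto
  ultimately have "\<bar>integral {a..x} (RL_left_L1 a n h) - RL_left_powr a n F x\<bar>
      = \<bar>RL_left_powr a n (\<lambda>s. H s - F s) x\<bar>"
    by simp
  also have "\<dots> \<le> A_dist a b h F * (x - a) powr n / (n * Gamma n)"
    using x close by (intro abs_RL_left_powr_le[OF n]) (auto intro!: continuous_intros
        continuous_on_subset[OF H] continuous_on_subset[OF F])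
  also have "\<dots> \<le> A_dist a b h F * (b - a) powr n / (n * Gamma n)"
    using x n close[of a] by (intro divide_right_mono mult_left_mono powr_mono2) auto
  finally show ?thesis .
qed

lemma continuous_on_integral_RL_left_L1:
  fixes h :: "real \<Rightarrow> real"
  assumes "n > 0" and "h absolutely_integrable_on {a..b}"
  shows "continuous_on {a..b} (\<lambda>x. integral {a..x} (RL_left_L1 a n h))"
  using integral_RL_left_powr(1)[OF assms]
  by (intro indefinite_integral_continuous_1) (simp add: RL_left_L1_eq_RL_left_powr)

lemma RL_left_L1_Alexiewicz_tendsto:
  fixes hs :: "nat \<Rightarrow> real \<Rightarrow> real" and F :: "real \<Rightarrow> real"
  assumes n: "n > 0" and "a \<le> b" and F: "continuous_on {a..b} F"
    and hs: "\<And>k. hs k absolutely_integrable_on {a..b}"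
    and lim: "(\<lambda>k. A_dist a b (hs k) F) \<longlonglongrightarrow> 0"
  shows "(\<lambda>k. A_dist a b (RL_left_L1 a n (hs k)) (RL_left_powr a n F)) \<longlonglongrightarrow> 0"
proof -
  have "(\<lambda>k. A_dist a b (hs k) F * (b - a) powr n / (n * Gamma n)) \<longlonglongrightarrow> 0"
    using tendsto_mult_left_zero[OF lim, of "(b - a) powr n / (n * Gamma n)"] by simp
  then show ?thesis
    using RL_left_L1_Alexiewicz_estimate[OF n hs F]
    by (intro A_dist_tendsto_zero[OF \<open>a \<le> b\<close>, where hs = "\<lambda>k. RL_left_L1 a n (hs k)"
        and B = "\<lambda>k. A_dist a b (hs k) F * (b - a) powr n / (n * Gamma n)"])
qed

lemma continuous_on_RL_left_powr:
  fixes F :: "real \<Rightarrow> real"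
  assumes n: "n > 0" and "a \<le> b" and F: "continuous_on {a..b} F" and "F a = 0"
  shows "continuous_on {a..b} (RL_left_powr a n F)"
proof -
  obtain fs where fs: "\<And>k. continuous_on UNIV (fs k)" and lim: "(\<lambda>k. A_dist a b (fs k) F) \<longlonglongrightarrow> 0"
    using continuous_Alexiewicz_approximation[OF \<open>a \<le> b\<close> F \<open>F a = 0\<close>] by blast
  have fs_int: "fs k absolutely_integrable_on {a..b}" for k
    using fs by (intro absolutely_integrable_continuous_real continuous_on_subset[OF fs]) auto
  define C where "C = (b - a) powr n / (n * Gamma n)"
  show ?thesis
  proof (rule uniform_limit_theorem)
    show "\<forall>\<^sub>F k in sequentially. continuous_on {a..b} (\<lambda>x. integral {a..x} (RL_left_L1 a n (fs k)))"
      using continuous_on_integral_RL_left_L1[OF n fs_int] by simp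
    show "uniform_limit {a..b} (\<lambda>k x. integral {a..x} (RL_left_L1 a n (fs k))) (RL_left_powr a n F) sequentially"
    proof (rule uniform_limitI)
      fix e :: real assume "e > 0"
      have "(\<lambda>k. A_dist a b (fs k) F * C) \<longlonglongrightarrow> 0"
        using tendsto_mult_left_zero[OF lim] .
      then have "\<forall>\<^sub>F k in sequentially. A_dist a b (fs k) F * C < e"
        using \<open>e > 0\<close> by (rule order_tendstoD(2))
      then show "\<forall>\<^sub>F k in sequentially. \<forall>x\<in>{a..b}.
          dist (integral {a..x} (RL_left_L1 a n (fs k))) (RL_left_powr a n F x) < e"
      proof (rule eventually_mono, intro ballI)
        fix k x assume "A_dist a b (fs k) F * C < e" and "x \<in> {a..b}"
        moreover from RL_left_L1_Alexiewicz_estimate[OF n fs_int F this(2), of k]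
        have "dist (integral {a..x} (RL_left_L1 a n (fs k))) (RL_left_powr a n F x) \<le> A_dist a b (fs k) F * C"
          by (simp add: dist_real_def C_def)
        ultimately show "dist (integral {a..x} (RL_left_L1 a n (fs k))) (RL_left_powr a n F x) < e"
          by linarith
      qed
    qed
  qed simp
qed

lemma Alexiewicz_limit_unique:
  fixes hs :: "nat \<Rightarrow> real \<Rightarrow> real" and G1 G2 :: "real \<Rightarrow> real"
  assumes hs: "\<And>k. continuous_on {a..b} (\<lambda>x. integral {a..x} (hs k))"
    and G1: "continuous_on {a..b} G1" and G2: "continuous_on {a..b} G2"
    and lim1: "(\<lambda>k. A_dist a b (hs k) G1) \<longlonglongrightarrow> 0"
    and lim2: "(\<lambda>k. A_dist a b (hs k) G2) \<longlonglongrightarrow> 0"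
    and x: "x \<in> {a..b}"
  shows "G1 x = G2 x"
proof -
  have "\<bar>G1 x - G2 x\<bar> \<le> A_dist a b (hs k) G1 + A_dist a b (hs k) G2" for k
  proof -
    have "\<bar>integral {a..x} (hs k) - G1 x\<bar> \<le> A_dist a b (hs k) G1"
      by (rule A_dist_ge[OF _ x]) (intro continuous_intros hs G1)
    moreover have "\<bar>integral {a..x} (hs k) - G2 x\<bar> \<le> A_dist a b (hs k) G2"
      by (rule A_dist_ge[OF _ x]) (intro continuous_intros hs G2)
    ultimately show ?thesis by linarith
  qed
  then have "\<bar>G1 x - G2 x\<bar> \<le> 0"
    using tendsto_add[OF lim1 lim2] by (intro LIMSEQ_le_const) auto
  then show ?thesis by simp
qed

lemma RL_left_frac_prim_eq:
  fixes F :: "real \<Rightarrow> real"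
  assumes n: "n > 0" and "a \<le> b" and F: "continuous_on {a..b} F" and "F a = 0"
  shows "RL_left_frac_prim a b n F = (\<lambda>x. if x \<in> {a..b} then RL_left_powr a n F x else 0)"
proof -
  define G0 where "G0 = (\<lambda>x. if x \<in> {a..b} then RL_left_powr a n F x else 0)"
  have A_dist_G0: "A_dist a b h G0 = A_dist a b h (RL_left_powr a n F)" for h
    unfolding A_dist_def G0_def by (intro SUP_cong) auto
  have G0_cont: "continuous_on {a..b} G0"
    using continuous_on_RL_left_powr[OF n \<open>a \<le> b\<close> F \<open>F a = 0\<close>]
    by (rule continuous_on_eq) (simp add: G0_def)
  obtain fs where fs: "\<And>k. continuous_on UNIV (fs k)" and lim: "(\<lambda>k. A_dist a b (fs k) F) \<longlonglongrightarrow> 0"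
    using continuous_Alexiewicz_approximation[OF \<open>a \<le> b\<close> F \<open>F a = 0\<close>] by blast
  have fs_int: "fs k absolutely_integrable_on {a..b}" for k
    using fs by (intro absolutely_integrable_continuous_real continuous_on_subset[OF fs]) auto
  define P where "P G \<longleftrightarrow> continuous_on {a..b} G \<and> G a = 0 \<and> (\<forall>x. x \<notin> {a..b} \<longrightarrow> G x = 0) \<and>
      (\<forall>hs. (\<forall>k. hs k absolutely_integrable_on {a..b}) \<and> (\<lambda>k. A_dist a b (hs k) F) \<longlonglongrightarrow> 0
         \<longrightarrow> (\<lambda>k. A_dist a b (RL_left_L1 a n (hs k)) G) \<longlonglongrightarrow> 0)" for G
  have "RL_left_frac_prim a b n F = (THE G. P G)"
    by (simp add: RL_left_frac_prim_def P_def)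
  also have "\<dots> = G0"
  proof (rule the_equality)
    show "P G0"
      unfolding P_def using G0_cont RL_left_L1_Alexiewicz_tendsto[OF n \<open>a \<le> b\<close> F] \<open>a \<le> b\<close>
      by (auto simp: A_dist_G0) (simp_all add: G0_def RL_left_powr_def)
    fix G assume "P G"
    show "G = G0"
    proof
      fix x
      show "G x = G0 x"
      proof (cases "x \<in> {a..b}")
        case True
        show ?thesis
        proof (rule Alexiewicz_limit_unique[OF _ _ G0_cont _ _ True])
          show "continuous_on {a..b} (\<lambda>x. integral {a..x} (RL_left_L1 a n (fs k)))" for k
            by (rule continuous_on_integral_RL_left_L1[OF n fs_int])
          show "(\<lambda>k. A_dist a b (RL_left_L1 a n (fs k)) G0) \<longlonglongrightarrow> 0"
            using RL_left_L1_Alexiewicz_tendsto[OF n \<open>a \<le> b\<close> F fs_int lim] by (simp add: A_dist_G0)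
        qed (use \<open>P G\<close> fs_int lim in \<open>auto simp: P_def\<close>)
      next
        case False
        then show ?thesis using \<open>P G\<close> by (auto simp: P_def G0_def)
      qed
    qed
  qed
  finally show ?thesis
    by (simp add: G0_def)
qed

lemma RL_left_pairing:
  fixes F \<psi> \<psi>' :: "real \<Rightarrow> real"
  assumes "a \<le> b" and n: "n > 0" and F: "continuous_on {a..b} F" and "F a = 0"
    and \<psi>: "\<And>t. (\<psi> has_real_derivative \<psi>' t) (at t)" and \<psi>': "continuous_on UNIV \<psi>'"
    and "\<psi> b = 0"
  shows "RL_left a b n F \<psi> = - integral {a..b} (\<lambda>t. F t * RL_right_powr b n \<psi>' t)"
proof -
  have \<psi>_cont: "continuous_on {a..b} \<psi>"
    using \<psi> by (meson DERIV_continuous continuous_at_imp_continuous_on)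
  consider "n < 1" | "n = 1" | "n > 1" by linarith
  then show ?thesis
  proof cases
    case 1
    have "RL_left a b n F \<psi> = - integral {a..b} (\<lambda>x. RL_left_powr a n F x * \<psi>' x)"
      using 1 by (auto simp: RL_left_def hk_dist_def DERIV_imp_deriv[OF \<psi>]
          RL_left_frac_prim_eq[OF n \<open>a \<le> b\<close> F \<open>F a = 0\<close>] intro!: integral_cong)
    then show ?thesis
      using RL_left_powr_duality[OF n F continuous_on_subset[OF \<psi>']] by simp
  next
    case 2
    have "RL_left_pt a 1 F x = F x" if "x \<in> {a..b}" for x
      using that by (intro RL_left_pt_one continuous_on_subset[OF F] \<open>F a = 0\<close>) auto
    then have "RL_left a b n F \<psi> = integral {a..b} (\<lambda>x. F x * \<psi> x)"
      using 2 by (auto simp: RL_left_def regular_dist_def intro!: integral_cong)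
    moreover have "integral {a..b} (\<lambda>t. F t * RL_right_powr b 1 \<psi>' t) = integral {a..b} (\<lambda>t. - (F t * \<psi> t))"
      by (intro integral_cong) (simp add: RL_right_powr_one[OF \<psi> \<open>\<psi> b = 0\<close>])
    ultimately show ?thesis
      using 2 by simp
  next
    case 3
    have "RL_left_pt a n F x = RL_left_powr a (n - 1) F x" if "x \<in> {a..b}" for x
      using that 3 by (intro RL_left_pt_eq_RL_left_powr continuous_on_subset[OF F] \<open>F a = 0\<close>) auto
    then have "RL_left a b n F \<psi> = integral {a..b} (\<lambda>x. RL_left_powr a (n - 1) F x * \<psi> x)"
      using 3 by (auto simp: RL_left_def regular_dist_def intro!: integral_cong)
    also have "\<dots> = integral {a..b} (\<lambda>t. F t * RL_right_powr b (n - 1) \<psi> t)"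
      using 3 by (intro RL_left_powr_duality F \<psi>_cont) simp
    finally show ?thesis
      using 3 RL_right_powr_by_parts[of "n - 1", OF _ \<psi> \<psi>' \<open>\<psi> b = 0\<close>] by simp
  qed
qed

lemma higher_deriv_vanishes_outside:
  fixes \<phi> :: "real \<Rightarrow> real"
  assumes "\<And>x. x \<notin> {c..d} \<Longrightarrow> \<phi> x = 0" and "x \<notin> {c..d}"
  shows "(deriv ^^ k) \<phi> x = 0"
  using assms(2)
proof (induction k arbitrary: x)
  case 0
  then show ?case using assms(1) by simp
next
  case (Suc k)
  have "((\<lambda>_. 0) has_real_derivative 0) (at x)"
    by simp
  then have "((deriv ^^ k) \<phi> has_real_derivative 0) (at x)"
    by (rule has_field_derivative_transform_within_open[of _ _ _ "- {c..d}"]) (use Suc in auto)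
  then show ?case by (simp add: DERIV_imp_deriv)
qed

lemma test_fun_higher_deriv:
  assumes "test_fun a b \<phi>"
  shows "((deriv ^^ k) \<phi> has_real_derivative (deriv ^^ Suc k) \<phi> x) (at x)"
    and "(deriv ^^ k) \<phi> b = 0"
proof -
  show "((deriv ^^ k) \<phi> has_real_derivative (deriv ^^ Suc k) \<phi> x) (at x)"
    using assms by (simp add: test_fun_def DERIV_deriv_iff_real_differentiable)
  obtain c d where "d < b" and "\<And>x. x \<notin> {c..d} \<Longrightarrow> \<phi> x = 0"
    using assms unfolding test_fun_def by blast
  then show "(deriv ^^ k) \<phi> b = 0"
    by (intro higher_deriv_vanishes_outside) auto
qed

lemma higher_deriv_RL_right:
  fixes \<phi> :: "real \<Rightarrow> real"
  assumes n: "n > 0"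
    and \<phi>: "\<And>k x. ((deriv ^^ k) \<phi> has_real_derivative (deriv ^^ Suc k) \<phi> x) (at x)"
    and \<phi>_b: "\<And>k. (deriv ^^ k) \<phi> b = 0"
  shows "(RL_right_powr b n ((deriv ^^ k) \<phi>) has_real_derivative
           RL_right_powr b n ((deriv ^^ Suc k) \<phi>) x) (at x)"
    and "(deriv ^^ k) (RL_right b n \<phi>) = RL_right_powr b n ((deriv ^^ k) \<phi>)"
proof -
  have cont: "continuous_on UNIV ((deriv ^^ k) \<phi>)" for k
    using \<phi> by (meson DERIV_continuous continuous_at_imp_continuous_on)
  show deriv: "(RL_right_powr b n ((deriv ^^ k) \<phi>) has_real_derivative
      RL_right_powr b n ((deriv ^^ Suc k) \<phi>) x) (at x)" for k x
    by (rule RL_right_powr_has_derivative[OF n \<phi> \<phi> cont \<phi>_b \<phi>_b])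
  show "(deriv ^^ k) (RL_right b n \<phi>) = RL_right_powr b n ((deriv ^^ k) \<phi>)"
  proof (induction k)
    case 0
    then show ?case by (simp add: RL_right_eq_RL_right_powr)
  next
    case (Suc k)
    have "(deriv ^^ Suc k) (RL_right b n \<phi>) = deriv (RL_right_powr b n ((deriv ^^ k) \<phi>))"
      using Suc by simp
    also have "\<dots> = RL_right_powr b n ((deriv ^^ Suc k) \<phi>)"
      using deriv[of k] by (intro ext DERIV_imp_deriv)
    finally show ?case .
  qed
qed

theorem lemma4p7:
  fixes a b n :: real and F \<phi> :: "real \<Rightarrow> real" and j :: nat
  assumes "a < b" and "0 < n"
    and "continuous_on {a..b} F" and "F a = 0"
    and "test_fun a b \<phi>"
  shows "dist_deriv j (RL_left a b n F) \<phi>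
           = (-1) ^ j * hk_int a b F ((deriv ^^ j) (RL_right b n \<phi>))"
proof -
  define D where "D k = (deriv ^^ k) \<phi>" for k
  note \<phi> = test_fun_higher_deriv[OF \<open>test_fun a b \<phi>\<close>]
  have D: "(D k has_real_derivative D (Suc k) x) (at x)" "D k b = 0" for k x
    using \<phi> by (simp_all add: D_def)
  have D_cont: "continuous_on UNIV (D k)" for k
    using D(1) by (meson DERIV_continuous continuous_at_imp_continuous_on)
  have R: "(RL_right_powr b n (D k) has_real_derivative RL_right_powr b n (D (Suc k)) x) (at x)" for k x
    unfolding D_def by (rule higher_deriv_RL_right(1)[OF \<open>0 < n\<close> \<phi>])
  have R_cont: "continuous_on {a..b} (RL_right_powr b n (D k))" for k
    using R by (meson DERIV_continuous continuous_at_imp_continuous_on)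
  have "dist_deriv j (RL_left a b n F) \<phi> = (-1) ^ j * RL_left a b n F (D j)"
    by (simp add: dist_deriv_def D_def)
  also have "RL_left a b n F (D j) = - integral {a..b} (\<lambda>t. F t * RL_right_powr b n (D (Suc j)) t)"
    using \<open>a < b\<close> assms(2-4) D D_cont by (intro RL_left_pairing) auto
  also have "\<dots> = hk_int a b F (RL_right_powr b n (D j))"
    using hk_int_eq_integral_deriv[OF \<open>continuous_on {a..b} F\<close> R_cont R] \<open>F a = 0\<close>
    by (simp add: RL_right_powr_def)
  also have "RL_right_powr b n (D j) = (deriv ^^ j) (RL_right b n \<phi>)"
    unfolding D_def by (rule higher_deriv_RL_right(2)[OF \<open>0 < n\<close> \<phi>, symmetric])
  finally show ?thesis .
qed

end
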